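(* Let $\mathbf{L}$ be the least monotonic predicate modal logic (respectively the least monotonic topped, the least monotonic cufi, the least monotonic topped cufi predicate modal logic). Then for every formula $\varphi$: $\varphi\in\mathbf{L}$ if and only if $Z\models\varphi$ for every monotonic (respectively monotonic topped, monotonic cufi, monotonic topped cufi) neighborhood frame $Z$. In particular, the least normal predicate modal logic $\mathbf{QK}$ is sound and complete with respect to the class of monotonic, topped, cufi neighborhood frames with constant domains.
   Context: Language: countable set $\mathsf{V}$ of variables, $\top,\bot$, $\land,\neg$, $\forall$, countably many $n$-ary predicate symbols for each $n\in\mathbb{N}$, and $\Box$. A predicate modal logic is a set $\mathbf{L}$ of formulas containing all theorems of classical predicate logic, closed under substitution, modus ponens, generalization, and the rule $\varphi\equiv\psi\in\mathbf{L}\Rightarrow\Box\varphi\equiv\Box\psi\in\mathbf{L}$. It is monotonic if it contains $\Box(p\land q)\supset\Box p\land\Box q$, topped if it contains $\Box\top$, cufi if it contains $\Box p\land\Box q\supset\Box(p\land q)$ ($p,q$ 0-ary predicate symbols); normal means monotonic, topped and cufi. A neighborhood frame is $\langle C,\mathcal{V}\rangle$ with $C\ne\emptyset$, $\mathcal{V}:C\to\mathcal{P}(\mathcal{P}(C))$; it is monotonic if each $\mathcal{V}(c)$ is upward closed under $\subseteq$, topped if $C\in\mathcal{V}(c)$ for all $c$, cufi if each $\mathcal{V}(c)$ is closed under non-empty finite intersections. A neighborhood model on $\langle C,\mathcal{V}\rangle$ adds a single non-empty domain $\mathcal{D}$ and an interpretation $\mathcal{I}(c,P)\subseteq\mathcal{D}^n$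 for $n$-ary $P$; truth sets under assignments $\mathcal{A}:\mathsf{V}\to\mathcal{D}$ are defined classically with $\|\forall x\varphi\|_{\mathcal{A}}=\bigcap$ over $x$-variants of $\mathcal{A}$ and $c\in\|\Box\varphi\|_{\mathcal{A}}$ iff $\|\varphi\|_{\mathcal{A}}\in\mathcal{V}(c)$. $\mathcal{M}\models\varphi$ means $\|\varphi\|_{\mathcal{A}}=C$ for all $\mathcal{A}$; $Z\models\varphi$ means $\mathcal{M}\models\varphi$ for every model $\mathcal{M}$ on $Z$ (every domain and interpretation). *)

theory Defs
  imports Main
begin

text \<open>The atom  Atom k xs  is the predicate symbol
  number k of arity  length xs  applied to the variable list xs; thus for every arity n
  there are countably many n-ary predicate symbols (k, n).\<close>

datatype fm =
    Top
  | Bot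
  | Atom nat "nat list"
  | Conj fm fm
  | Neg fm
  | Forall nat fm
  | Box fm

definition Imp :: "fm \<Rightarrow> fm \<Rightarrow> fm" where
  "Imp p q = Neg (Conj p (Neg q))"

definition Iff :: "fm \<Rightarrow> fm \<Rightarrow> fm" where
  "Iff p q = Conj (Imp p q) (Imp q p)"

primrec fv :: "fm \<Rightarrow> nat set" where
  "fv Top = {}"
| "fv Bot = {}"
| "fv (Atom k xs) = set xs"
| "fv (Conj p q) = fv p \<union> fv q"
| "fv (Neg p) = fv p"
| "fv (Forall x p) = fv p - {x}"
| "fv (Box p) = fv p"

text \<open>Renaming of free variables by s (B = variables bound so far); no renaming of bound
  variables, so it is only used together with the side condition vsubst_ok
  ("the substitution is free for the formula", i.e. no capture).\<close>

primrec vsubst :: "(nat \<Rightarrow> nat) \<Rightarrow> nat set \<Rightarrow> fm \<Rightarrow> fm" where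
  "vsubst s B Top = Top"
| "vsubst s B Bot = Bot"
| "vsubst s B (Atom k xs) = Atom k (map (\<lambda>v. if v \<in> B then v else s v) xs)"
| "vsubst s B (Conj p q) = Conj (vsubst s B p) (vsubst s B q)"
| "vsubst s B (Neg p) = Neg (vsubst s B p)"
| "vsubst s B (Forall x p) = Forall x (vsubst s (insert x B) p)"
| "vsubst s B (Box p) = Box (vsubst s B p)"

primrec vsubst_ok :: "(nat \<Rightarrow> nat) \<Rightarrow> nat set \<Rightarrow> fm \<Rightarrow> bool" where
  "vsubst_ok s B Top = True"
| "vsubst_ok s B Bot = True"
| "vsubst_ok s B (Atom k xs) = (\<forall>v\<in>set xs. v \<notin> B \<longrightarrow> s v \<notin> B)"
| "vsubst_ok s B (Conj p q) = (vsubst_ok s B p \<and> vsubst_ok s B q)"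
| "vsubst_ok s B (Neg p) = vsubst_ok s B p"
| "vsubst_ok s B (Forall x p) = vsubst_ok s (insert x B) p"
| "vsubst_ok s B (Box p) = vsubst_ok s B p"

text \<open>A substitution sigma assigns
  to the predicate symbol (k, n) a pair (ys, psi): P_k(ys) is to be replaced by psi, where
  ys is a list of n distinct variables.  The occurrence Atom k xs becomes psi with ys
  replaced simultaneously by xs.\<close>

definition inst :: "nat list \<Rightarrow> nat list \<Rightarrow> nat \<Rightarrow> nat" where
  "inst ys xs v = (case map_of (zip ys xs) v of None \<Rightarrow> v | Some x \<Rightarrow> x)"

type_synonym psubst = "nat \<Rightarrow> nat \<Rightarrow> nat list \<times> fm"

primrec psubst :: "psubst \<Rightarrow> fm \<Rightarrow> fm" where
  "psubst \<sigma> Top = Top"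
| "psubst \<sigma> Bot = Bot"
| "psubst \<sigma> (Atom k xs) =
     (case \<sigma> k (length xs) of (ys, \<psi>) \<Rightarrow> vsubst (inst ys xs) {} \<psi>)"
| "psubst \<sigma> (Conj p q) = Conj (psubst \<sigma> p) (psubst \<sigma> q)"
| "psubst \<sigma> (Neg p) = Neg (psubst \<sigma> p)"
| "psubst \<sigma> (Forall x p) = Forall x (psubst \<sigma> p)"
| "psubst \<sigma> (Box p) = Box (psubst \<sigma> p)"

text \<open>Admissibility (no variable capture, well-formed substitution) of sigma for the
  occurrences in a formula, B being the variables bound at the current position.\<close>

primrec psubst_ok :: "psubst \<Rightarrow> nat set \<Rightarrow> fm \<Rightarrow> bool" where
  "psubst_ok \<sigma> B Top = True"
| "psubst_ok \<sigma> B Bot = True"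
| "psubst_ok \<sigma> B (Atom k xs) =
     (case \<sigma> k (length xs) of (ys, \<psi>) \<Rightarrow>
        length ys = length xs \<and> distinct ys \<and> vsubst_ok (inst ys xs) {} \<psi> \<and>
        (\<forall>v \<in> fv \<psi> - set ys. v \<notin> B))"
| "psubst_ok \<sigma> B (Conj p q) = (psubst_ok \<sigma> B p \<and> psubst_ok \<sigma> B q)"
| "psubst_ok \<sigma> B (Neg p) = psubst_ok \<sigma> B p"
| "psubst_ok \<sigma> B (Forall x p) = psubst_ok \<sigma> (insert x B) p"
| "psubst_ok \<sigma> B (Box p) = psubst_ok \<sigma> B p"

text \<open>Propositional tautologies: formulas true under every Boolean valuation of their
  prime (atomic, universally quantified and boxed) subformulas.\<close>

primrec tv :: "(fm \<Rightarrow> bool) \<Rightarrow> fm \<Rightarrow> bool" where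
  "tv v Top = True"
| "tv v Bot = False"
| "tv v (Atom k xs) = v (Atom k xs)"
| "tv v (Conj p q) = (tv v p \<and> tv v q)"
| "tv v (Neg p) = (\<not> tv v p)"
| "tv v (Forall x p) = v (Forall x p)"
| "tv v (Box p) = v (Box p)"

definition tautology :: "fm \<Rightarrow> bool" where
  "tautology p = (\<forall>v. tv v p)"

text \<open>Hilbert-style calculus for classical predicate logic (Mendelson's system K,
  terms being variables), over the whole language.\<close>

inductive_set QCL :: "fm set" where
  taut: "tautology p \<Longrightarrow> p \<in> QCL"
| inst_ax: "vsubst_ok (id(x := y)) {} p \<Longrightarrow>
      Imp (Forall x p) (vsubst (id(x := y)) {} p) \<in> QCL"
| dist_ax: "x \<notin> fv p \<Longrightarrow> Imp (Forall x (Imp p q)) (Imp p (Forall x q)) \<in> QCL"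
| mp: "p \<in> QCL \<Longrightarrow> Imp p q \<in> QCL \<Longrightarrow> q \<in> QCL"
| gen: "p \<in> QCL \<Longrightarrow> Forall x p \<in> QCL"

definition pml :: "fm set \<Rightarrow> bool" where
  "pml L \<longleftrightarrow>
     QCL \<subseteq> L \<and>
     (\<forall>p \<sigma>. p \<in> L \<longrightarrow> psubst_ok \<sigma> {} p \<longrightarrow> psubst \<sigma> p \<in> L) \<and>
     (\<forall>p q. p \<in> L \<longrightarrow> Imp p q \<in> L \<longrightarrow> q \<in> L) \<and>
     (\<forall>p x. p \<in> L \<longrightarrow> Forall x p \<in> L) \<and>
     (\<forall>p q. Iff p q \<in> L \<longrightarrow> Iff (Box p) (Box q) \<in> L)"

abbreviation pp :: fm where "pp \<equiv> Atom 0 []"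
abbreviation qq :: fm where "qq \<equiv> Atom 1 []"

definition mono_ax :: fm where
  "mono_ax = Imp (Box (Conj pp qq)) (Conj (Box pp) (Box qq))"

definition topped_ax :: fm where
  "topped_ax = Box Top"

definition cufi_ax :: fm where
  "cufi_ax = Imp (Conj (Box pp) (Box qq)) (Box (Conj pp qq))"

text \<open>The least monotonic predicate modal logic, additionally topped if t, additionally
  cufi if c.  (t = c = True gives the least normal logic QK.)\<close>

definition least_logic :: "bool \<Rightarrow> bool \<Rightarrow> fm set" where
  "least_logic t c = \<Inter> {L. pml L \<and> mono_ax \<in> L \<and> (t \<longrightarrow> topped_ax \<in> L) \<and>
                              (c \<longrightarrow> cufi_ax \<in> L)}"

definition nframe :: "'w set \<Rightarrow> ('w \<Rightarrow> 'w set set) \<Rightarrow> bool" where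
  "nframe C V \<longleftrightarrow> C \<noteq> {} \<and> (\<forall>c\<in>C. V c \<subseteq> Pow C)"

definition mono_frame :: "'w set \<Rightarrow> ('w \<Rightarrow> 'w set set) \<Rightarrow> bool" where
  "mono_frame C V \<longleftrightarrow> (\<forall>c\<in>C. \<forall>X Y. X \<in> V c \<longrightarrow> X \<subseteq> Y \<longrightarrow> Y \<subseteq> C \<longrightarrow> Y \<in> V c)"

definition topped_frame :: "'w set \<Rightarrow> ('w \<Rightarrow> 'w set set) \<Rightarrow> bool" where
  "topped_frame C V \<longleftrightarrow> (\<forall>c\<in>C. C \<in> V c)"

definition cufi_frame :: "'w set \<Rightarrow> ('w \<Rightarrow> 'w set set) \<Rightarrow> bool" where
  "cufi_frame C V \<longleftrightarrow>
     (\<forall>c\<in>C. \<forall>F. finite F \<longrightarrow> F \<noteq> {} \<longrightarrow> F \<subseteq> V c \<longrightarrow> \<Inter>F \<in> V c)"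

definition frame_class :: "bool \<Rightarrow> bool \<Rightarrow> 'w set \<Rightarrow> ('w \<Rightarrow> 'w set set) \<Rightarrow> bool" where
  "frame_class t c C V \<longleftrightarrow> nframe C V \<and> mono_frame C V \<and>
      (t \<longrightarrow> topped_frame C V) \<and> (c \<longrightarrow> cufi_frame C V)"

text \<open>A model adds a nonempty domain D and an interpretation I: I c k is the set of tuples
  (lists) satisfying predicate symbol k at world c; the tuples of length n give the
  interpretation of the n-ary symbol (k, n), a subset of D^n.\<close>

primrec truth :: "'w set \<Rightarrow> ('w \<Rightarrow> 'w set set) \<Rightarrow> 'd set \<Rightarrow> ('w \<Rightarrow> nat \<Rightarrow> 'd list set)
                   \<Rightarrow> (nat \<Rightarrow> 'd) \<Rightarrow> fm \<Rightarrow> 'w set" where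
  "truth C V D I A Top = C"
| "truth C V D I A Bot = {}"
| "truth C V D I A (Atom k xs) = {c\<in>C. map A xs \<in> I c k}"
| "truth C V D I A (Conj p q) = truth C V D I A p \<inter> truth C V D I A q"
| "truth C V D I A (Neg p) = C - truth C V D I A p"
| "truth C V D I A (Forall x p) = {c\<in>C. \<forall>d\<in>D. c \<in> truth C V D I (A(x := d)) p}"
| "truth C V D I A (Box p) = {c\<in>C. truth C V D I A p \<in> V c}"

definition nmodel :: "'w set \<Rightarrow> 'd set \<Rightarrow> ('w \<Rightarrow> nat \<Rightarrow> 'd list set) \<Rightarrow> bool" where
  "nmodel C D I \<longleftrightarrow> D \<noteq> {} \<and> (\<forall>c\<in>C. \<forall>k. \<forall>ts\<in>I c k. set ts \<subseteq> D)"

definition model_valid :: "'w set \<Rightarrow> ('w \<Rightarrow> 'w set set) \<Rightarrow> 'd set \<Rightarrow> ('w \<Rightarrow> nat \<Rightarrow> 'd list set)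
                           \<Rightarrow> fm \<Rightarrow> bool" where
  "model_valid C V D I p \<longleftrightarrow> (\<forall>A. range A \<subseteq> D \<longrightarrow> truth C V D I A p = C)"

text \<open>Validity on a frame, for all domains (drawn from the type 'd) and interpretations.\<close>

definition frame_valid :: "'d itself \<Rightarrow> 'w set \<Rightarrow> ('w \<Rightarrow> 'w set set) \<Rightarrow> fm \<Rightarrow> bool" where
  "frame_valid _ C V p \<longleftrightarrow> (\<forall>(D::'d set) I. nmodel C D I \<longrightarrow> model_valid C V D I p)"

end

theory Submission
  imports Defs "HOL-Library.Countable"
begin

text \<open>Soundness: on a frame of the given class the valid formulas form a predicate modal logic
  containing the axioms of the class (uniform substitution is validated by reinterpreting every
  predicate symbol as the truth set of its substituend), so they include the least such logic.

  Completeness is a canonical model argument with constant domain: fix an infinite set D of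
  variables, which serves both as the domain and as the supply of Henkin witnesses.  Worlds are the
  maximal consistent sets that are saturated with witnesses from D, and the neighbourhoods of a
  world G are the supersets of the proof sets of the \<rho> with Box \<rho> \<in> G.  This frame is
  monotonic by construction, and topped resp. cufi if the logic contains the corresponding axiom;
  the monotonicity axiom is what makes a proof set a neighbourhood of G only if its box is in G.
  The truth lemma holds for formulas whose bound variables avoid D and whose free variables lie
  in D; a non-theorem \<phi> is refuted after renaming its free variables into D = - bv \<phi>.\<close>

lemma tv_Imp [simp]: "tv v (Imp p q) = (tv v p \<longrightarrow> tv v q)"
  by (simp add: Imp_def)

lemma tv_Iff [simp]: "tv v (Iff p q) = (tv v p \<longleftrightarrow> tv v q)"
  by (auto simp: Iff_def)

lemma truth_subset: "truth C V D I A p \<subseteq> C"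
  by (induction p arbitrary: A) auto

lemma truth_Imp_eq_iff:
  "truth C V D I A (Imp p q) = C \<longleftrightarrow> truth C V D I A p \<subseteq> truth C V D I A q"
  using truth_subset[of C V D I A p] by (auto simp: Imp_def)

lemma truth_Iff_eq_iff:
  "truth C V D I A (Iff p q) = C \<longleftrightarrow> truth C V D I A p = truth C V D I A q"
  using truth_subset[of C V D I A p] truth_subset[of C V D I A q] by (auto simp: Iff_def Imp_def)

lemma tv_truth: "c \<in> C \<Longrightarrow> tv (\<lambda>f. c \<in> truth C V D I A f) p = (c \<in> truth C V D I A p)"
  by (induction p) auto

lemma truth_cong: "(\<And>v. v \<in> fv p \<Longrightarrow> A v = A' v) \<Longrightarrow> truth C V D I A p = truth C V D I A' p"
proof (induction p arbitrary: A A')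
  case (Atom k xs)
  then have "map A xs = map A' xs" by (intro map_cong) simp_all
  then show ?case by (simp only: truth.simps)
next
  case (Conj p q)
  have "truth C V D I A p = truth C V D I A' p" by (rule Conj.IH(1)) (simp add: Conj.prems)
  moreover have "truth C V D I A q = truth C V D I A' q" by (rule Conj.IH(2)) (simp add: Conj.prems)
  ultimately show ?case by simp
next
  case (Neg p)
  have "truth C V D I A p = truth C V D I A' p" by (rule Neg.IH) (simp add: Neg.prems)
  then show ?case by simp
next
  case (Forall x p)
  have "truth C V D I (A(x:=d)) p = truth C V D I (A'(x:=d)) p" for d
    by (rule Forall.IH) (simp add: Forall.prems)
  then show ?case by simp
next
  case (Box p)
  have "truth C V D I A p = truth C V D I A' p" by (rule Box.IH) (simp add: Box.prems)
  then show ?case by simp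
qed simp_all

lemma vsubst_ok_fv: "vsubst_ok s B p \<Longrightarrow> v \<in> fv p \<Longrightarrow> v \<notin> B \<Longrightarrow> s v \<notin> B"
  by (induction p arbitrary: B) auto

lemma truth_vsubst:
  "vsubst_ok s B p \<Longrightarrow>
   truth C V D I A (vsubst s B p) = truth C V D I (\<lambda>v. if v \<in> B then A v else A (s v)) p"
proof (induction p arbitrary: A B)
  case (Atom k xs)
  have "map A (map (\<lambda>v. if v \<in> B then v else s v) xs) =
        map (\<lambda>v. if v \<in> B then A v else A (s v)) xs"
    by auto
  then show ?case by (simp only: truth.simps vsubst.simps)
next
  case (Forall x p)
  have ok: "vsubst_ok s (insert x B) p" using Forall.prems by simp
  have "truth C V D I (A(x:=d)) (vsubst s (insert x B) p) =
        truth C V D I ((\<lambda>v. if v \<in> B then A v else A (s v))(x:=d)) p" for d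
  proof -
    have "truth C V D I (A(x:=d)) (vsubst s (insert x B) p) =
      truth C V D I (\<lambda>v. if v \<in> insert x B then (A(x:=d)) v else (A(x:=d)) (s v)) p"
      using Forall.IH[OF ok] by simp
    also have "\<dots> = truth C V D I ((\<lambda>v. if v \<in> B then A v else A (s v))(x:=d)) p"
      by (rule truth_cong) (use vsubst_ok_fv[OF ok] in auto)
    finally show ?thesis .
  qed
  then show ?case by simp
qed auto

lemma truth_rename:
  assumes "vsubst_ok (id(x := y)) {} p"
  shows "truth C V D I A (vsubst (id(x := y)) {} p) = truth C V D I (A(x := A y)) p"
proof -
  have "(\<lambda>v. if v \<in> {} then A v else A ((id(x := y)) v)) = A(x := A y)"
    by auto
  then show ?thesis using truth_vsubst[OF assms, of C V D I A] by simp
qed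

lemma map_of_zip_map: "map_of (zip ys (map f xs)) v = map_option f (map_of (zip ys xs) v)"
  by (induction ys arbitrary: xs) (auto simp: zip_Cons1 split: list.splits)

text \<open>Each predicate symbol is read as the truth set of its substituend, with the parameters ys
  bound to the tuple ds and all other variables evaluated by A.\<close>

definition psubst_interp :: "'w set \<Rightarrow> ('w \<Rightarrow> 'w set set) \<Rightarrow> 'd set \<Rightarrow> ('w \<Rightarrow> nat \<Rightarrow> 'd list set)
    \<Rightarrow> (nat \<Rightarrow> 'd) \<Rightarrow> psubst \<Rightarrow> 'w \<Rightarrow> nat \<Rightarrow> 'd list set" where
  "psubst_interp C V D I A \<sigma> = (\<lambda>c k. {ds. set ds \<subseteq> D \<and> (case \<sigma> k (length ds) of (ys, \<psi>) \<Rightarrow>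
      c \<in> truth C V D I (\<lambda>v. case map_of (zip ys ds) v of None \<Rightarrow> A v | Some d \<Rightarrow> d) \<psi>)})"

lemma truth_psubst:
  "psubst_ok \<sigma> B p \<Longrightarrow> range A' \<subseteq> D \<Longrightarrow> (\<forall>v. v \<notin> B \<longrightarrow> A' v = A v) \<Longrightarrow>
   truth C V D I A' (psubst \<sigma> p) = truth C V D (psubst_interp C V D I A \<sigma>) A' p"
proof (induction p arbitrary: A' B)
  case (Atom k xs)
  obtain ys \<psi> where s: "\<sigma> k (length xs) = (ys, \<psi>)" by (cases "\<sigma> k (length xs)")
  from Atom.prems(1) s have len: "length ys = length xs" and ok: "vsubst_ok (inst ys xs) {} \<psi>"
    and free: "\<forall>v \<in> fv \<psi> - set ys. v \<notin> B" by auto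
  have "truth C V D I A' (psubst \<sigma> (Atom k xs)) = truth C V D I (\<lambda>v. A' (inst ys xs v)) \<psi>"
    using s truth_vsubst[OF ok, of C V D I A'] by simp
  also have "\<dots> = truth C V D I
      (\<lambda>v. case map_of (zip ys (map A' xs)) v of None \<Rightarrow> A v | Some d \<Rightarrow> d) \<psi>"
  proof (rule truth_cong)
    fix v assume v: "v \<in> fv \<psi>"
    show "A' (inst ys xs v) = (case map_of (zip ys (map A' xs)) v of None \<Rightarrow> A v | Some d \<Rightarrow> d)"
    proof (cases "map_of (zip ys xs) v")
      case None
      then have "v \<notin> set ys" using map_of_zip_is_None[OF len] by simp
      then show ?thesis using None free v Atom.prems(3) by (simp add: inst_def map_of_zip_map)
    qed (simp add: inst_def map_of_zip_map)
  qed
  also have "\<dots> = truth C V D (psubst_interp C V D I A \<sigma>) A' (Atom k xs)"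
    using s Atom.prems(2) by (auto simp: psubst_interp_def dest: truth_subset[THEN subsetD])
  finally show ?case .
next
  case (Forall x p)
  have "truth C V D I (A'(x:=d)) (psubst \<sigma> p) = truth C V D (psubst_interp C V D I A \<sigma>) (A'(x:=d)) p"
    if "d \<in> D" for d
    by (rule Forall.IH[of "insert x B"]) (use Forall.prems that in auto)
  then show ?case by simp
next
  case (Conj p q)
  have "truth C V D I A' (psubst \<sigma> p) = truth C V D (psubst_interp C V D I A \<sigma>) A' p"
    by (rule Conj.IH(1)[of B]) (use Conj.prems in auto)
  moreover have "truth C V D I A' (psubst \<sigma> q) = truth C V D (psubst_interp C V D I A \<sigma>) A' q"
    by (rule Conj.IH(2)[of B]) (use Conj.prems in auto)
  ultimately show ?case by simp
next
  case (Neg p)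
  have "truth C V D I A' (psubst \<sigma> p) = truth C V D (psubst_interp C V D I A \<sigma>) A' p"
    by (rule Neg.IH[of B]) (use Neg.prems in auto)
  then show ?case by simp
qed auto

section \<open>Soundness\<close>

lemma frame_valid_iff:
  "frame_valid TYPE('d) C V p \<longleftrightarrow>
     (\<forall>(D::'d set) I A. nmodel C D I \<longrightarrow> range A \<subseteq> D \<longrightarrow> truth C V D I A p = C)"
  by (auto simp: frame_valid_def model_valid_def)

lemma frame_valid_psubst:
  assumes "frame_valid TYPE('d) C V p" "psubst_ok \<sigma> {} p"
  shows "frame_valid TYPE('d) C V (psubst \<sigma> p)"
  unfolding frame_valid_iff
proof (intro allI impI)
  fix D :: "'d set" and I and A :: "nat \<Rightarrow> 'd"
  assume "nmodel C D I" and A: "range A \<subseteq> D"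
  then have "nmodel C D (psubst_interp C V D I A \<sigma>)"
    by (auto simp: nmodel_def psubst_interp_def)
  then have "truth C V D (psubst_interp C V D I A \<sigma>) A p = C"
    using assms(1) A by (auto simp: frame_valid_iff)
  moreover have "truth C V D I A (psubst \<sigma> p) = truth C V D (psubst_interp C V D I A \<sigma>) A p"
    by (rule truth_psubst[OF assms(2) A]) simp
  ultimately show "truth C V D I A (psubst \<sigma> p) = C" by simp
qed

lemma frame_valid_mp:
  assumes "frame_valid TYPE('d) C V p" "frame_valid TYPE('d) C V (Imp p q)"
  shows "frame_valid TYPE('d) C V q"
  unfolding frame_valid_iff
proof (intro allI impI)
  fix D :: "'d set" and I and A :: "nat \<Rightarrow> 'd"
  assume "nmodel C D I" "range A \<subseteq> D"
  then have "truth C V D I A p = C" "truth C V D I A p \<subseteq> truth C V D I A q"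
    using assms[unfolded frame_valid_iff, rule_format, of D I A] by (simp_all add: truth_Imp_eq_iff)
  then show "truth C V D I A q = C" using truth_subset[of C V D I A q] by blast
qed

lemma frame_valid_Forall:
  assumes "frame_valid TYPE('d) C V p"
  shows "frame_valid TYPE('d) C V (Forall x p)"
  unfolding frame_valid_iff
proof (intro allI impI)
  fix D :: "'d set" and I and A :: "nat \<Rightarrow> 'd"
  assume "nmodel C D I" "range A \<subseteq> D"
  then have "truth C V D I (A(x:=d)) p = C" if "d \<in> D" for d
    using assms[unfolded frame_valid_iff, rule_format, of D I "A(x:=d)"] that by auto
  then show "truth C V D I A (Forall x p) = C" by auto
qed

lemma frame_valid_Box_cong:
  "frame_valid TYPE('d) C V (Iff p q) \<Longrightarrow> frame_valid TYPE('d) C V (Iff (Box p) (Box q))"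
  by (simp add: frame_valid_iff truth_Iff_eq_iff)

lemma frame_valid_Imp:
  "(\<And>(D::'d set) I A. nmodel C D I \<Longrightarrow> range A \<subseteq> D \<Longrightarrow>
      truth C V D I A p \<subseteq> truth C V D I A q) \<Longrightarrow>
   frame_valid TYPE('d) C V (Imp p q)"
  by (simp add: frame_valid_iff truth_Imp_eq_iff)

lemma frame_valid_QCL: "p \<in> QCL \<Longrightarrow> frame_valid TYPE('d) C V p"
proof (induction p rule: QCL.induct)
  case (taut p)
  have "truth C V D I A p = C" for D :: "'d set" and I and A :: "nat \<Rightarrow> 'd"
  proof (rule subset_antisym[OF truth_subset subsetI])
    fix c assume "c \<in> C"
    then show "c \<in> truth C V D I A p"
      using taut tv_truth[of c C V D I A p] by (simp add: tautology_def)
  qed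
  then show ?case by (simp add: frame_valid_iff)
next
  case (inst_ax x y p)
  show ?case
  proof (rule frame_valid_Imp)
    fix D :: "'d set" and I and A :: "nat \<Rightarrow> 'd"
    assume "range A \<subseteq> D"
    then have "A y \<in> D" by auto
    moreover have "truth C V D I A (vsubst (id(x := y)) {} p) = truth C V D I (A(x := A y)) p"
      by (rule truth_rename[OF inst_ax])
    ultimately show "truth C V D I A (Forall x p) \<subseteq> truth C V D I A (vsubst (id(x := y)) {} p)"
      by auto
  qed
next
  case (dist_ax x p q)
  show ?case
  proof (rule frame_valid_Imp)
    fix D :: "'d set" and I and A :: "nat \<Rightarrow> 'd"
    have "truth C V D I (A(x:=d)) p = truth C V D I A p" for d
      by (rule truth_cong) (use dist_ax in auto)
    then show "truth C V D I A (Forall x (Imp p q)) \<subseteq> truth C V D I A (Imp p (Forall x q))"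
      by (auto simp: Imp_def)
  qed
qed (auto intro: frame_valid_mp frame_valid_Forall)

lemma pml_frame_valid: "pml {p. frame_valid TYPE('d) C V p}"
  unfolding pml_def mem_Collect_eq
proof (intro conjI allI impI subsetI CollectI)
  show "frame_valid TYPE('d) C V p" if "p \<in> QCL" for p
    using that by (rule frame_valid_QCL)
  show "frame_valid TYPE('d) C V (psubst \<sigma> p)"
    if "frame_valid TYPE('d) C V p" "psubst_ok \<sigma> {} p" for p \<sigma>
    using that by (rule frame_valid_psubst)
  show "frame_valid TYPE('d) C V q"
    if "frame_valid TYPE('d) C V p" "frame_valid TYPE('d) C V (Imp p q)" for p q
    using that by (rule frame_valid_mp)
  show "frame_valid TYPE('d) C V (Forall x p)" if "frame_valid TYPE('d) C V p" for p x
    using that by (rule frame_valid_Forall)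
  show "frame_valid TYPE('d) C V (Iff (Box p) (Box q))" if "frame_valid TYPE('d) C V (Iff p q)" for p q
    using that by (rule frame_valid_Box_cong)
qed

lemma frame_valid_mono_ax:
  assumes "mono_frame C V"
  shows "frame_valid TYPE('d) C V mono_ax"
  unfolding mono_ax_def
proof (rule frame_valid_Imp, rule subsetI)
  fix D :: "'d set" and I and A :: "nat \<Rightarrow> 'd" and w
  let ?X = "truth C V D I A pp" and ?Y = "truth C V D I A qq"
  assume "w \<in> truth C V D I A (Box (Conj pp qq))"
  then have w: "w \<in> C" "?X \<inter> ?Y \<in> V w" by auto
  have "?X \<in> V w" "?Y \<in> V w"
    using assms[unfolded mono_frame_def, rule_format, OF w] by (simp_all add: truth_subset)
  then show "w \<in> truth C V D I A (Conj (Box pp) (Box qq))" using \<open>w \<in> C\<close> by simp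
qed

lemma frame_valid_topped_ax: "topped_frame C V \<Longrightarrow> frame_valid TYPE('d) C V topped_ax"
  by (auto simp: frame_valid_iff topped_ax_def topped_frame_def)

lemma frame_valid_cufi_ax:
  assumes "cufi_frame C V"
  shows "frame_valid TYPE('d) C V cufi_ax"
  unfolding cufi_ax_def
proof (rule frame_valid_Imp, rule subsetI)
  fix D :: "'d set" and I and A :: "nat \<Rightarrow> 'd" and w
  let ?X = "truth C V D I A pp" and ?Y = "truth C V D I A qq"
  assume "w \<in> truth C V D I A (Conj (Box pp) (Box qq))"
  then have "w \<in> C" "{?X, ?Y} \<subseteq> V w" by auto
  then have "\<Inter>{?X, ?Y} \<in> V w"
    using assms[unfolded cufi_frame_def, rule_format, of w "{?X, ?Y}"] by simp
  then show "w \<in> truth C V D I A (Box (Conj pp qq))" using \<open>w \<in> C\<close> by simp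
qed

lemma least_logic_subset:
  "pml L \<Longrightarrow> mono_ax \<in> L \<Longrightarrow> (t \<Longrightarrow> topped_ax \<in> L) \<Longrightarrow> (c \<Longrightarrow> cufi_ax \<in> L) \<Longrightarrow>
   least_logic t c \<subseteq> L"
  unfolding least_logic_def by blast

theorem least_logic_sound:
  assumes "frame_class t c C V" "\<phi> \<in> least_logic t c"
  shows "frame_valid TYPE('d) C V \<phi>"
proof -
  have "least_logic t c \<subseteq> {p. frame_valid TYPE('d) C V p}"
  proof (rule least_logic_subset[OF pml_frame_valid])
    show "mono_ax \<in> {p. frame_valid TYPE('d) C V p}"
      using assms(1) frame_valid_mono_ax by (auto simp: frame_class_def)
    show "topped_ax \<in> {p. frame_valid TYPE('d) C V p}" if t
      using assms(1) that frame_valid_topped_ax by (auto simp: frame_class_def)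
    show "cufi_ax \<in> {p. frame_valid TYPE('d) C V p}" if c
      using assms(1) that frame_valid_cufi_ax by (auto simp: frame_class_def)
  qed
  then show ?thesis using assms(2) by blast
qed

instance fm :: countable
  by countable_datatype

primrec bv :: "fm \<Rightarrow> nat set" where
  "bv Top = {}"
| "bv Bot = {}"
| "bv (Atom k xs) = {}"
| "bv (Conj p q) = bv p \<union> bv q"
| "bv (Neg p) = bv p"
| "bv (Forall x p) = insert x (bv p)"
| "bv (Box p) = bv p"

definition vars :: "fm \<Rightarrow> nat set" where
  "vars p = fv p \<union> bv p"

lemma finite_fv [simp]: "finite (fv p)"
  by (induction p) auto

lemma finite_bv [simp]: "finite (bv p)"
  by (induction p) auto

lemma finite_vars [simp]: "finite (vars p)"
  by (simp add: vars_def)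

lemma vsubst_ok_rename: "y \<notin> B \<union> bv p \<Longrightarrow> vsubst_ok (id(x := y)) B p"
  by (induction p arbitrary: B) auto

lemma bv_vsubst [simp]: "bv (vsubst s B p) = bv p"
  by (induction p arbitrary: B) auto

lemma size_vsubst [simp]: "size (vsubst s B p) = size p"
  by (induction p arbitrary: B) auto

lemma fv_vsubst: "fv (vsubst s B p) \<subseteq> (fv p \<inter> B) \<union> s ` (fv p - B)"
  by (induction p arbitrary: B) fastforce+

lemma fv_rename: "fv (vsubst (id(x := y)) {} p) \<subseteq> (id(x := y)) ` fv p"
  using fv_vsubst[of "id(x := y)" "{}" p] by simp

lemma vsubst_id: "vsubst (\<lambda>v. v) B p = p"
  by (induction p arbitrary: B) (auto intro: map_idI)

lemma vsubst_ok_id: "vsubst_ok (\<lambda>v. v) B p"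
  by (induction p arbitrary: B) auto

lemma vsubst_rename_back:
  "d \<notin> vars p \<Longrightarrow> d \<notin> B \<Longrightarrow> vsubst (id(d := x)) B (vsubst (id(x := d)) B p) = p"
  by (induction p arbitrary: B) (auto simp: vars_def intro!: map_idI)

lemma vsubst_ok_rename_back:
  "d \<notin> vars p \<Longrightarrow> d \<notin> B \<Longrightarrow> vsubst_ok (id(d := x)) B (vsubst (id(x := d)) B p)"
  by (induction p arbitrary: B) (auto simp: vars_def)

primrec conjs :: "fm list \<Rightarrow> fm" where
  "conjs [] = Top"
| "conjs (p # ps) = Conj p (conjs ps)"

lemma tv_conjs [simp]: "tv v (conjs ps) = (\<forall>p\<in>set ps. tv v p)"
  by (induction ps) auto

lemma fv_conjs: "fv (conjs ps) = (\<Union>p\<in>set ps. fv p)"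
  by (induction ps) auto

lemma pml_QCL: "pml L \<Longrightarrow> p \<in> QCL \<Longrightarrow> p \<in> L"
  unfolding pml_def by blast

lemma pml_mp: "pml L \<Longrightarrow> p \<in> L \<Longrightarrow> Imp p q \<in> L \<Longrightarrow> q \<in> L"
  unfolding pml_def by blast

lemma pml_Forall: "pml L \<Longrightarrow> p \<in> L \<Longrightarrow> Forall x p \<in> L"
  unfolding pml_def by blast

lemma pml_Box_cong: "pml L \<Longrightarrow> Iff p q \<in> L \<Longrightarrow> Iff (Box p) (Box q) \<in> L"
  unfolding pml_def by blast

lemma pml_psubst: "pml L \<Longrightarrow> p \<in> L \<Longrightarrow> psubst_ok \<sigma> {} p \<Longrightarrow> psubst \<sigma> p \<in> L"
  unfolding pml_def by blast

lemma pml_tautology: "pml L \<Longrightarrow> tautology p \<Longrightarrow> p \<in> L"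
  using pml_QCL QCL.taut by blast

lemma pml_conjs: "pml L \<Longrightarrow> set ps \<subseteq> L \<Longrightarrow> conjs ps \<in> L"
proof (induction ps)
  case Nil
  then show ?case by (auto intro: pml_tautology simp: tautology_def)
next
  case (Cons p ps)
  have "Imp p (Imp (conjs ps) (Conj p (conjs ps))) \<in> L"
    by (rule pml_tautology[OF Cons.prems(1)]) (simp add: tautology_def)
  then show ?case using Cons pml_mp by (metis insert_subset list.set(2) conjs.simps(2))
qed

lemma pml_tautological_consequence:
  assumes "pml L" "set ps \<subseteq> L" "\<And>v. \<forall>p\<in>set ps. tv v p \<Longrightarrow> tv v q"
  shows "q \<in> L"
proof -
  have "Imp (conjs ps) q \<in> L"
    by (rule pml_tautology[OF assms(1)]) (use assms(3) in \<open>simp add: tautology_def\<close>)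
  then show ?thesis using pml_conjs[OF assms(1,2)] pml_mp[OF assms(1)] by blast
qed

lemma pml_Forall_rename:
  assumes L: "pml L" and d: "d \<notin> vars \<psi>" "d \<noteq> x"
  shows "Imp (Forall d (vsubst (id(x := d)) {} \<psi>)) (Forall x \<psi>) \<in> L"
proof -
  let ?\<psi>d = "vsubst (id(x := d)) {} \<psi>"
  have "Imp (Forall d ?\<psi>d) (vsubst (id(d := x)) {} ?\<psi>d) \<in> QCL"
    by (rule QCL.inst_ax) (use vsubst_ok_rename_back[OF d(1)] in simp)
  then have "Imp (Forall d ?\<psi>d) \<psi> \<in> L"
    using vsubst_rename_back[OF d(1)] pml_QCL[OF L] by simp
  then have gen: "Forall x (Imp (Forall d ?\<psi>d) \<psi>) \<in> L"
    by (rule pml_Forall[OF L])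
  have "x \<notin> fv (Forall d ?\<psi>d)"
    using fv_rename[of x d \<psi>] d(2) by auto
  then have "Imp (Forall x (Imp (Forall d ?\<psi>d) \<psi>)) (Imp (Forall d ?\<psi>d) (Forall x \<psi>)) \<in> L"
    by (intro pml_QCL[OF L] QCL.dist_ax)
  then show ?thesis using gen pml_mp[OF L] by blast
qed

lemma inst_Nil [simp]: "inst [] [] = (\<lambda>v. v)"
  by (rule ext) (simp add: inst_def)

lemma mono_ax_instance:
  assumes "pml L" "mono_ax \<in> L"
  shows "Imp (Box (Conj a b)) (Conj (Box a) (Box b)) \<in> L"
proof -
  let ?\<sigma> = "\<lambda>k n. if k = 0 then ([], a) else ([], b)"
  have "psubst ?\<sigma> mono_ax \<in> L"
    using assms by (rule pml_psubst) (simp add: mono_ax_def Imp_def vsubst_ok_id)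
  then show ?thesis by (simp add: mono_ax_def Imp_def vsubst_id)
qed

lemma cufi_ax_instance:
  assumes "pml L" "cufi_ax \<in> L"
  shows "Imp (Conj (Box a) (Box b)) (Box (Conj a b)) \<in> L"
proof -
  let ?\<sigma> = "\<lambda>k n. if k = 0 then ([], a) else ([], b)"
  have "psubst ?\<sigma> cufi_ax \<in> L"
    using assms by (rule pml_psubst) (simp add: cufi_ax_def Imp_def vsubst_ok_id)
  then show ?thesis by (simp add: cufi_ax_def Imp_def vsubst_id)
qed

lemma pml_Box_mono:
  assumes L: "pml L" and "mono_ax \<in> L" and "Imp \<rho> \<chi> \<in> L"
  shows "Imp (Box \<rho>) (Box \<chi>) \<in> L"
proof -
  have "Iff \<rho> (Conj \<rho> \<chi>) \<in> L"
    by (rule pml_tautological_consequence[of L "[Imp \<rho> \<chi>]"]) (use assms in auto)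
  then have eq: "Iff (Box \<rho>) (Box (Conj \<rho> \<chi>)) \<in> L"
    by (rule pml_Box_cong[OF L])
  have mono: "Imp (Box (Conj \<rho> \<chi>)) (Conj (Box \<rho>) (Box \<chi>)) \<in> L"
    by (rule mono_ax_instance[OF L \<open>mono_ax \<in> L\<close>])
  show ?thesis
    by (rule pml_tautological_consequence[of L
          "[Iff (Box \<rho>) (Box (Conj \<rho> \<chi>)), Imp (Box (Conj \<rho> \<chi>)) (Conj (Box \<rho>) (Box \<chi>))]"])
      (use L eq mono in auto)
qed

lemma pml_rename_not_mem:
  assumes L: "pml L" and "\<psi> \<notin> L" and y: "y \<notin> vars \<psi>"
  shows "vsubst (id(x := y)) {} \<psi> \<notin> L"
proof
  assume "vsubst (id(x := y)) {} \<psi> \<in> L"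
  then have "Forall y (vsubst (id(x := y)) {} \<psi>) \<in> L"
    by (rule pml_Forall[OF L])
  moreover have "Imp (Forall y (vsubst (id(x := y)) {} \<psi>))
      (vsubst (id(y := x)) {} (vsubst (id(x := y)) {} \<psi>)) \<in> L"
    using y by (intro pml_QCL[OF L] QCL.inst_ax vsubst_ok_rename_back) auto
  ultimately have "vsubst (id(y := x)) {} (vsubst (id(x := y)) {} \<psi>) \<in> L"
    by (rule pml_mp[OF L])
  then show False using assms(2) vsubst_rename_back[OF y] by simp
qed

section \<open>Consistency and Lindenbaum's lemma\<close>

definition consistent :: "fm set \<Rightarrow> fm set \<Rightarrow> bool" where
  "consistent L S \<longleftrightarrow> \<not> (\<exists>ps. set ps \<subseteq> S \<and> Neg (conjs ps) \<in> L)"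

lemma consistent_subset: "consistent L S' \<Longrightarrow> S \<subseteq> S' \<Longrightarrow> consistent L S"
  unfolding consistent_def by blast

lemma inconsistent_insertD:
  assumes L: "pml L" and "\<not> consistent L (insert p S)"
  obtains ps where "set ps \<subseteq> S" "Imp (conjs ps) (Neg p) \<in> L"
proof -
  obtain ps where ps: "set ps \<subseteq> insert p S" "Neg (conjs ps) \<in> L"
    using assms(2) unfolding consistent_def by blast
  let ?qs = "filter (\<lambda>f. f \<noteq> p) ps"
  have "set ?qs \<subseteq> S" using ps(1) by auto
  moreover have "Imp (conjs ?qs) (Neg p) \<in> L"
    by (rule pml_tautological_consequence[of L "[Neg (conjs ps)]"]) (use L ps(2) in auto)
  ultimately show ?thesis using that by blast
qed

lemma consistent_insert_cases:
  assumes L: "pml L" and cons: "consistent L S"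
  shows "consistent L (insert p S) \<or> consistent L (insert (Neg p) S)"
proof (rule ccontr)
  assume "\<not> ?thesis"
  then have "\<not> consistent L (insert p S)" "\<not> consistent L (insert (Neg p) S)" by simp_all
  then obtain ps qs where ps: "set ps \<subseteq> S" "Imp (conjs ps) (Neg p) \<in> L"
    and qs: "set qs \<subseteq> S" "Imp (conjs qs) (Neg (Neg p)) \<in> L"
    using inconsistent_insertD[OF L] by metis
  have "Neg (conjs (ps @ qs)) \<in> L"
    by (rule pml_tautological_consequence[of L "[Imp (conjs ps) (Neg p), Imp (conjs qs) (Neg (Neg p))]"])
      (use L ps qs in auto)
  moreover have "set (ps @ qs) \<subseteq> S" using ps qs by simp
  ultimately show False using cons unfolding consistent_def by blast
qed

lemma consistent_insert_instance:
  assumes L: "pml L" and cons: "consistent L (insert (Neg (Forall x \<psi>)) S)"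
    and d: "\<forall>f\<in>S. d \<notin> vars f" "d \<notin> vars \<psi>" "d \<noteq> x"
  shows "consistent L (insert (Neg (vsubst (id(x := d)) {} \<psi>)) (insert (Neg (Forall x \<psi>)) S))"
proof (rule ccontr)
  let ?\<psi>d = "vsubst (id(x := d)) {} \<psi>" and ?N = "Neg (Forall x \<psi>)"
  assume "\<not> ?thesis"
  then obtain ps where ps: "set ps \<subseteq> insert ?N S" "Imp (conjs ps) (Neg (Neg ?\<psi>d)) \<in> L"
    using inconsistent_insertD[OF L] by blast
  have "Imp (conjs ps) ?\<psi>d \<in> L"
    by (rule pml_tautological_consequence[of L "[Imp (conjs ps) (Neg (Neg ?\<psi>d))]"]) (use L ps in auto)
  then have "Forall d (Imp (conjs ps) ?\<psi>d) \<in> L"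
    by (rule pml_Forall[OF L])
  moreover have "d \<notin> fv (conjs ps)"
    using ps(1) d by (auto simp: fv_conjs vars_def)
  then have "Imp (Forall d (Imp (conjs ps) ?\<psi>d)) (Imp (conjs ps) (Forall d ?\<psi>d)) \<in> L"
    by (intro pml_QCL[OF L] QCL.dist_ax)
  ultimately have all: "Imp (conjs ps) (Forall d ?\<psi>d) \<in> L"
    using pml_mp[OF L] by blast
  have "Neg (conjs (?N # ps)) \<in> L"
    by (rule pml_tautological_consequence[of L
          "[Imp (conjs ps) (Forall d ?\<psi>d), Imp (Forall d ?\<psi>d) (Forall x \<psi>)]"])
      (use L all pml_Forall_rename[OF L d(2,3)] in auto)
  moreover have "set (?N # ps) \<subseteq> insert ?N S" using ps(1) by auto
  ultimately show False using cons unfolding consistent_def by blast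
qed

definition fresh_var :: "nat set \<Rightarrow> fm set \<Rightarrow> nat" where
  "fresh_var D S = (SOME d. d \<in> D \<and> (\<forall>f\<in>S. d \<notin> vars f))"

lemma fresh_var:
  assumes "infinite D" "finite S"
  shows "fresh_var D S \<in> D" "\<forall>f\<in>S. fresh_var D S \<notin> vars f"
proof -
  have "infinite (D - (\<Union>f\<in>S. vars f))"
    using assms by (simp add: Diff_infinite_finite)
  then obtain d where "d \<in> D - (\<Union>f\<in>S. vars f)"
    by (metis finite.emptyI ex_in_conv)
  then have "\<exists>d. d \<in> D \<and> (\<forall>f\<in>S. d \<notin> vars f)" by blast
  then have "fresh_var D S \<in> D \<and> (\<forall>f\<in>S. fresh_var D S \<notin> vars f)"
    unfolding fresh_var_def by (rule someI_ex)
  then show "fresh_var D S \<in> D" "\<forall>f\<in>S. fresh_var D S \<notin> vars f" by blast+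
qed

fun henkin_witness :: "nat set \<Rightarrow> fm set \<Rightarrow> fm \<Rightarrow> fm set" where
  "henkin_witness D S (Neg (Forall x \<psi>)) = {Neg (vsubst (id(x := fresh_var D S)) {} \<psi>)}"
| "henkin_witness D S _ = {}"

lemma finite_henkin_witness: "finite (henkin_witness D S f)"
  by (induction D S f rule: henkin_witness.induct) auto

lemma consistent_henkin_witness:
  assumes L: "pml L" and D: "infinite D" and S: "finite S" "consistent L S" and f: "f \<in> S"
  shows "consistent L (S \<union> henkin_witness D S f)"
proof (cases "\<exists>x \<psi>. f = Neg (Forall x \<psi>)")
  case True
  then obtain x \<psi> where f_eq: "f = Neg (Forall x \<psi>)" by blast
  let ?d = "fresh_var D S"
  have fresh: "\<forall>g\<in>S. ?d \<notin> vars g" using fresh_var(2)[OF D S(1)] .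
  then have "?d \<notin> vars \<psi>" "?d \<noteq> x" using f f_eq by (auto simp: vars_def)
  moreover have "consistent L (insert (Neg (Forall x \<psi>)) S)"
    using S(2) f f_eq by (simp add: insert_absorb)
  ultimately have "consistent L (insert (Neg (vsubst (id(x := ?d)) {} \<psi>)) (insert f S))"
    using consistent_insert_instance[OF L _ fresh] f_eq by blast
  then show ?thesis using f f_eq by (simp add: insert_absorb)
next
  case False
  then have "henkin_witness D S f = {}"
    by (induction D S f rule: henkin_witness.induct) auto
  then show ?thesis using S(2) by simp
qed

primrec lind_chain :: "fm set \<Rightarrow> nat set \<Rightarrow> fm set \<Rightarrow> nat \<Rightarrow> fm set" where
  "lind_chain L D S 0 = S"
| "lind_chain L D S (Suc n) =
     (if consistent L (insert (from_nat n) (lind_chain L D S n))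
      then insert (from_nat n) (lind_chain L D S n) \<union>
             henkin_witness D (insert (from_nat n) (lind_chain L D S n)) (from_nat n)
      else lind_chain L D S n)"

lemma finite_lind_chain: "finite S \<Longrightarrow> finite (lind_chain L D S n)"
  by (induction n) (simp_all add: finite_henkin_witness)

lemma lind_chain_mono: "m \<le> n \<Longrightarrow> lind_chain L D S m \<subseteq> lind_chain L D S n"
  by (rule lift_Suc_mono_le[of "lind_chain L D S"]) auto

lemma consistent_lind_chain:
  assumes L: "pml L" and D: "infinite D" and S: "finite S" "consistent L S"
  shows "consistent L (lind_chain L D S n)"
proof (induction n)
  case (Suc n)
  let ?T = "insert (from_nat n) (lind_chain L D S n)"
  have "finite ?T" using finite_lind_chain[OF S(1)] by simp
  then show ?case
    using Suc consistent_henkin_witness[OF L D, of ?T "from_nat n"] by simp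
qed (use S in simp)

lemma finite_subset_lind_chain:
  assumes "finite F" "F \<subseteq> (\<Union>n. lind_chain L D S n)"
  shows "\<exists>n. F \<subseteq> lind_chain L D S n"
  using assms
proof (induction F rule: finite_induct)
  case (insert a F)
  then obtain m n where "F \<subseteq> lind_chain L D S m" "a \<in> lind_chain L D S n" by auto
  then have "insert a F \<subseteq> lind_chain L D S (max m n)"
    using lind_chain_mono[of m "max m n" L D S] lind_chain_mono[of n "max m n" L D S] by auto
  then show ?case by blast
qed simp

definition saturated :: "nat set \<Rightarrow> fm set \<Rightarrow> bool" where
  "saturated D G \<longleftrightarrow> (\<forall>x \<psi>. Neg (Forall x \<psi>) \<in> G \<longrightarrow>
     (\<exists>d\<in>D. vsubst_ok (id(x := d)) {} \<psi> \<and> Neg (vsubst (id(x := d)) {} \<psi>) \<in> G))"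

definition world :: "fm set \<Rightarrow> nat set \<Rightarrow> fm set \<Rightarrow> bool" where
  "world L D G \<longleftrightarrow> consistent L G \<and> (\<forall>p. p \<in> G \<or> Neg p \<in> G) \<and> saturated D G"

lemma consistent_lind_Union:
  assumes L: "pml L" and D: "infinite D" and S: "finite S" "consistent L S"
  shows "consistent L (\<Union>n. lind_chain L D S n)"
  unfolding consistent_def
proof
  assume "\<exists>ps. set ps \<subseteq> (\<Union>n. lind_chain L D S n) \<and> Neg (conjs ps) \<in> L"
  then obtain ps where ps: "set ps \<subseteq> (\<Union>n. lind_chain L D S n)" "Neg (conjs ps) \<in> L" by blast
  obtain n where "set ps \<subseteq> lind_chain L D S n"
    using finite_subset_lind_chain[OF _ ps(1)] by auto
  then show False
    using ps(2) consistent_lind_chain[OF L D S, of n] unfolding consistent_def by blast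
qed

lemma lind_Union_complete:
  assumes L: "pml L" and D: "infinite D" and S: "finite S" "consistent L S"
  shows "p \<in> (\<Union>n. lind_chain L D S n) \<or> Neg p \<in> (\<Union>n. lind_chain L D S n)"
proof -
  let ?k = "max (to_nat p) (to_nat (Neg p))"
  have "consistent L (insert p (lind_chain L D S ?k)) \<or>
        consistent L (insert (Neg p) (lind_chain L D S ?k))"
    by (rule consistent_insert_cases[OF L consistent_lind_chain[OF L D S]])
  then have "consistent L (insert p (lind_chain L D S (to_nat p))) \<or>
             consistent L (insert (Neg p) (lind_chain L D S (to_nat (Neg p))))"
    using lind_chain_mono[of "to_nat p" ?k L D S] lind_chain_mono[of "to_nat (Neg p)" ?k L D S]
    by (meson consistent_subset insert_mono max.cobounded1 max.cobounded2)
  then have "p \<in> lind_chain L D S (Suc (to_nat p)) \<or>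
             Neg p \<in> lind_chain L D S (Suc (to_nat (Neg p)))"
    by auto
  then show ?thesis by blast
qed

lemma saturated_lind_Union:
  assumes L: "pml L" and D: "infinite D" and S: "finite S" "consistent L S"
  shows "saturated D (\<Union>n. lind_chain L D S n)"
  unfolding saturated_def
proof (intro allI impI)
  fix x \<psi>
  let ?f = "Neg (Forall x \<psi>)"
  let ?T = "insert ?f (lind_chain L D S (to_nat ?f))"
  assume "?f \<in> (\<Union>n. lind_chain L D S n)"
  then obtain m where "?f \<in> lind_chain L D S m" by blast
  then have "?T \<subseteq> lind_chain L D S (max (to_nat ?f) m)"
    using lind_chain_mono[of m "max (to_nat ?f) m" L D S]
      lind_chain_mono[of "to_nat ?f" "max (to_nat ?f) m" L D S] by auto
  then have "consistent L ?T" by (rule consistent_subset[OF consistent_lind_chain[OF L D S]])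
  then have "Neg (vsubst (id(x := fresh_var D ?T)) {} \<psi>) \<in> lind_chain L D S (Suc (to_nat ?f))"
    by simp
  moreover have "finite ?T" using finite_lind_chain[OF S(1)] by simp
  then have "fresh_var D ?T \<in> D" "fresh_var D ?T \<notin> vars ?f"
    using fresh_var[OF D] by blast+
  then have "fresh_var D ?T \<in> D" "fresh_var D ?T \<notin> {} \<union> bv \<psi>"
    by (auto simp: vars_def)
  ultimately show "\<exists>d\<in>D. vsubst_ok (id(x := d)) {} \<psi> \<and>
      Neg (vsubst (id(x := d)) {} \<psi>) \<in> (\<Union>n. lind_chain L D S n)"
    using vsubst_ok_rename by blast
qed

lemma lindenbaum:
  assumes "pml L" "infinite D" "finite S" "consistent L S"
  obtains G where "world L D G" "S \<subseteq> G"
proof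
  show "world L D (\<Union>n. lind_chain L D S n)"
    unfolding world_def
    using consistent_lind_Union[OF assms] lind_Union_complete[OF assms] saturated_lind_Union[OF assms]
    by blast
  show "S \<subseteq> (\<Union>n. lind_chain L D S n)"
    using lind_chain.simps(1)[of L D S] by blast
qed

lemma world_derives:
  assumes L: "pml L" and G: "world L D G" and ps: "set ps \<subseteq> G" and "Imp (conjs ps) q \<in> L"
  shows "q \<in> G"
proof (rule ccontr)
  assume "q \<notin> G"
  then have "set (Neg q # ps) \<subseteq> G" using G ps unfolding world_def by auto
  moreover have "Neg (conjs (Neg q # ps)) \<in> L"
    by (rule pml_tautological_consequence[of L "[Imp (conjs ps) q]"]) (use L assms(4) in auto)
  ultimately show False using G unfolding world_def consistent_def by blast
qed

lemma world_tautological_consequence: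
  "pml L \<Longrightarrow> world L D G \<Longrightarrow> set ps \<subseteq> G \<Longrightarrow> (\<And>v. \<forall>p\<in>set ps. tv v p \<Longrightarrow> tv v q) \<Longrightarrow> q \<in> G"
  by (rule world_derives) (auto intro: pml_tautology simp: tautology_def)

lemma world_mem_of_mem:
  assumes L: "pml L" and G: "world L D G" and "q \<in> L"
  shows "q \<in> G"
proof -
  have "Imp (conjs []) q \<in> L"
    by (rule pml_tautological_consequence[of L "[q]"]) (use assms in auto)
  then show ?thesis using world_derives[OF L G, of "[]" q] by simp
qed

lemma world_Top: "pml L \<Longrightarrow> world L D G \<Longrightarrow> Top \<in> G"
  using world_mem_of_mem[of L D G Top] pml_tautology[of L Top] by (simp add: tautology_def)

lemma world_mp: "pml L \<Longrightarrow> world L D G \<Longrightarrow> p \<in> G \<Longrightarrow> Imp p q \<in> L \<Longrightarrow> q \<in> G"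
  by (rule world_derives[of L D G "[p]"])
    (auto intro: pml_tautological_consequence[of L "[Imp p q]"] pml_tautology simp: tautology_def)

lemma world_Neg:
  assumes L: "pml L" and G: "world L D G"
  shows "Neg p \<in> G \<longleftrightarrow> p \<notin> G"
proof
  assume "Neg p \<in> G"
  show "p \<notin> G"
  proof
    assume "p \<in> G"
    then have "set [p, Neg p] \<subseteq> G" using \<open>Neg p \<in> G\<close> by simp
    moreover have "Neg (conjs [p, Neg p]) \<in> L"
      by (rule pml_tautology[OF L]) (simp add: tautology_def)
    ultimately show False using G unfolding world_def consistent_def by blast
  qed
qed (use G in \<open>auto simp: world_def\<close>)

lemma world_Bot: "pml L \<Longrightarrow> world L D G \<Longrightarrow> Bot \<notin> G"
  using world_mem_of_mem[of L D G "Neg Bot"] pml_tautology[of L "Neg Bot"] world_Neg[of L D G Bot]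
  by (simp add: tautology_def)

lemma world_Conj: "pml L \<Longrightarrow> world L D G \<Longrightarrow> Conj p q \<in> G \<longleftrightarrow> p \<in> G \<and> q \<in> G"
  by (auto intro: world_tautological_consequence[of L D G "[Conj p q]"]
      world_tautological_consequence[of L D G "[p, q]"])

lemma world_Imp: "pml L \<Longrightarrow> world L D G \<Longrightarrow> Imp p q \<in> G \<longleftrightarrow> (p \<in> G \<longrightarrow> q \<in> G)"
  by (simp add: Imp_def world_Neg world_Conj)

lemma world_Forall_iff:
  assumes L: "pml L" and G: "world L D G" and ok: "\<forall>d\<in>D. vsubst_ok (id(x := d)) {} q"
  shows "Forall x q \<in> G \<longleftrightarrow> (\<forall>d\<in>D. vsubst (id(x := d)) {} q \<in> G)"
proof
  assume "Forall x q \<in> G"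
  moreover have "Imp (Forall x q) (vsubst (id(x := d)) {} q) \<in> L" if "d \<in> D" for d
    using ok that by (intro pml_QCL[OF L] QCL.inst_ax) blast
  ultimately show "\<forall>d\<in>D. vsubst (id(x := d)) {} q \<in> G"
    using world_mp[OF L G] by blast
next
  assume "\<forall>d\<in>D. vsubst (id(x := d)) {} q \<in> G"
  then show "Forall x q \<in> G"
    using G world_Neg[OF L G] unfolding world_def saturated_def by blast
qed

lemma exists_world_not_mem:
  assumes L: "pml L" and D: "infinite D" and "q \<notin> L"
  obtains G where "world L D G" "q \<notin> G"
proof -
  have "consistent L {Neg q}"
  proof (rule ccontr)
    assume "\<not> consistent L {Neg q}"
    then obtain ps where "set ps \<subseteq> {}" "Imp (conjs ps) (Neg (Neg q)) \<in> L"
      using inconsistent_insertD[OF L] by blast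
    then have "q \<in> L"
      by (intro pml_tautological_consequence[of L "[Imp (conjs ps) (Neg (Neg q))]"]) (use L in auto)
    then show False using assms(3) by blast
  qed
  then obtain G where "world L D G" "Neg q \<in> G"
    using lindenbaum[OF L D, of "{Neg q}"] by auto
  then show ?thesis using that world_Neg[OF L] by blast
qed

section \<open>The canonical model\<close>

definition canon_worlds :: "fm set \<Rightarrow> nat set \<Rightarrow> fm set set" where
  "canon_worlds L D = {G. world L D G}"

definition proof_set :: "fm set \<Rightarrow> nat set \<Rightarrow> fm \<Rightarrow> fm set set" where
  "proof_set L D p = {G \<in> canon_worlds L D. p \<in> G}"

definition canon_nbhd :: "fm set \<Rightarrow> nat set \<Rightarrow> fm set \<Rightarrow> fm set set set" where
  "canon_nbhd L D G =
     {X. X \<subseteq> canon_worlds L D \<and> (\<exists>\<rho>. Box \<rho> \<in> G \<and> proof_set L D \<rho> \<subseteq> X)}"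

definition canon_interp :: "nat set \<Rightarrow> fm set \<Rightarrow> nat \<Rightarrow> nat list set" where
  "canon_interp D G k = {xs. set xs \<subseteq> D \<and> Atom k xs \<in> G}"

text \<open>Variables outside D are sent to an arbitrary d0 \<in> D; the truth lemma only concerns formulas
  whose free variables lie in D, where the assignment is the identity.\<close>

definition canon_assign :: "nat set \<Rightarrow> nat \<Rightarrow> nat \<Rightarrow> nat" where
  "canon_assign D d0 v = (if v \<in> D then v else d0)"

locale canonical_model =
  fixes L :: "fm set" and D :: "nat set" and t c :: bool
  assumes pml: "pml L" and mono: "mono_ax \<in> L"
    and topped: "t \<Longrightarrow> topped_ax \<in> L" and cufi: "c \<Longrightarrow> cufi_ax \<in> L"
    and infinite_D: "infinite D"
begin

abbreviation "W \<equiv> canon_worlds L D"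
abbreviation "N \<equiv> canon_nbhd L D"

lemma Imp_mem_of_proof_set_subset:
  assumes "proof_set L D \<rho> \<subseteq> proof_set L D \<chi>"
  shows "Imp \<rho> \<chi> \<in> L"
proof (rule ccontr)
  assume "Imp \<rho> \<chi> \<notin> L"
  then obtain G where G: "world L D G" "Imp \<rho> \<chi> \<notin> G"
    using exists_world_not_mem[OF pml infinite_D] by blast
  then have "\<rho> \<in> G" "\<chi> \<notin> G" using world_Imp[OF pml G(1)] by simp_all
  then show False using assms G(1) by (auto simp: proof_set_def canon_worlds_def)
qed

lemma proof_set_mem_canon_nbhd_iff:
  assumes "world L D G"
  shows "proof_set L D \<chi> \<in> N G \<longleftrightarrow> Box \<chi> \<in> G"
proof
  assume "proof_set L D \<chi> \<in> N G"
  then obtain \<rho> where \<rho>: "Box \<rho> \<in> G" "proof_set L D \<rho> \<subseteq> proof_set L D \<chi>"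
    by (auto simp: canon_nbhd_def)
  then have "Imp (Box \<rho>) (Box \<chi>) \<in> L"
    by (intro pml_Box_mono[OF pml mono] Imp_mem_of_proof_set_subset)
  then show "Box \<chi> \<in> G"
    by (rule world_mp[OF pml assms \<rho>(1)])
next
  assume "Box \<chi> \<in> G"
  then show "proof_set L D \<chi> \<in> N G"
    by (auto simp: canon_nbhd_def proof_set_def)
qed

lemma proof_set_Top: "proof_set L D Top = W"
  using world_Top[OF pml] by (auto simp: proof_set_def canon_worlds_def)

lemma proof_set_Bot: "proof_set L D Bot = {}"
  using world_Bot[OF pml] by (auto simp: proof_set_def canon_worlds_def)

lemma proof_set_Conj: "proof_set L D (Conj p q) = proof_set L D p \<inter> proof_set L D q"
  using world_Conj[OF pml] by (auto simp: proof_set_def canon_worlds_def)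

lemma proof_set_Neg: "proof_set L D (Neg p) = W - proof_set L D p"
  using world_Neg[OF pml] by (auto simp: proof_set_def canon_worlds_def)

lemma proof_set_Box: "proof_set L D (Box p) = {G \<in> W. proof_set L D p \<in> N G}"
  using proof_set_mem_canon_nbhd_iff by (auto simp: proof_set_def canon_worlds_def)

lemma proof_set_Forall:
  "\<forall>d\<in>D. vsubst_ok (id(x := d)) {} q \<Longrightarrow>
   proof_set L D (Forall x q) = {G \<in> W. \<forall>d\<in>D. G \<in> proof_set L D (vsubst (id(x := d)) {} q)}"
  using world_Forall_iff[OF pml] by (auto simp: proof_set_def canon_worlds_def)

lemma canon_nbhd_Int:
  assumes G: "world L D G" and "X \<in> N G" "Y \<in> N G" "c"
  shows "X \<inter> Y \<in> N G"
proof -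
  obtain \<rho> where \<rho>: "Box \<rho> \<in> G" "proof_set L D \<rho> \<subseteq> X" and X: "X \<subseteq> W"
    using assms(2) by (auto simp: canon_nbhd_def)
  obtain \<chi> where \<chi>: "Box \<chi> \<in> G" "proof_set L D \<chi> \<subseteq> Y"
    using assms(3) by (auto simp: canon_nbhd_def)
  have "Conj (Box \<rho>) (Box \<chi>) \<in> G"
    using \<rho>(1) \<chi>(1) world_Conj[OF pml G] by simp
  then have "Box (Conj \<rho> \<chi>) \<in> G"
    by (rule world_mp[OF pml G _ cufi_ax_instance[OF pml cufi[OF \<open>c\<close>]]])
  moreover have "proof_set L D (Conj \<rho> \<chi>) \<subseteq> X \<inter> Y"
    using \<rho>(2) \<chi>(2) world_Conj[OF pml] by (auto simp: proof_set_def canon_worlds_def)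
  ultimately show ?thesis
    using X unfolding canon_nbhd_def by blast
qed

lemma canon_frame_class:
  assumes "W \<noteq> {}"
  shows "frame_class t c W N"
  unfolding frame_class_def
proof (intro conjI impI)
  show "nframe W N" using assms by (auto simp: nframe_def canon_nbhd_def)
  show "mono_frame W N" unfolding mono_frame_def canon_nbhd_def by blast
next
  assume t
  have "Box Top \<in> G" if "world L D G" for G
    using world_mem_of_mem[OF pml that topped[OF \<open>t\<close>]] by (simp add: topped_ax_def)
  show "topped_frame W N"
    unfolding topped_frame_def
  proof
    fix G assume "G \<in> W"
    then have "world L D G" by (simp add: canon_worlds_def)
    then have "proof_set L D Top \<in> N G"
      using proof_set_mem_canon_nbhd_iff \<open>world L D G \<Longrightarrow> Box Top \<in> G\<close> by blast
    then show "W \<in> N G" by (simp only: proof_set_Top)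
  qed
next
  assume c
  show "cufi_frame W N" unfolding cufi_frame_def
  proof (intro ballI allI impI)
    fix G and F :: "fm set set set"
    assume "G \<in> W" "finite F" "F \<noteq> {}" "F \<subseteq> N G"
    then have G: "world L D G" by (simp add: canon_worlds_def)
    from \<open>finite F\<close> \<open>F \<noteq> {}\<close> \<open>F \<subseteq> N G\<close> show "\<Inter>F \<in> N G"
    proof (induction F rule: finite_ne_induct)
      case (insert X F)
      then have "X \<in> N G" "\<Inter>F \<in> N G" by simp_all
      then show ?case using canon_nbhd_Int[OF G _ _ \<open>c\<close>] by simp
    qed simp
  qed
qed

lemma truth_canonical:
  assumes d0: "d0 \<in> D"
  shows "bv p \<inter> D = {} \<Longrightarrow> fv p \<subseteq> D \<Longrightarrow>
    truth W N D (canon_interp D) (canon_assign D d0) p = proof_set L D p"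
proof (induction "size p" arbitrary: p rule: less_induct)
  case less
  let ?T = "truth W N D (canon_interp D)" and ?A = "canon_assign D d0"
  have IH: "?T ?A q = proof_set L D q" if "size q < size p" "bv q \<inter> D = {}" "fv q \<subseteq> D" for q
    using less.hyps that by blast
  show ?case
  proof (cases p)
    case (Atom k xs)
    then have "set xs \<subseteq> D" using less.prems by simp
    then have "map ?A xs = xs" by (auto simp: canon_assign_def intro!: map_idI)
    then show ?thesis
      using Atom \<open>set xs \<subseteq> D\<close> by (auto simp: proof_set_def canon_interp_def)
  next
    case (Conj p1 p2)
    then show ?thesis using less.prems IH[of p1] IH[of p2] by (simp add: proof_set_Conj Int_Un_distrib2)
  next
    case (Neg q)
    then show ?thesis using less.prems IH[of q] by (simp add: proof_set_Neg)
  next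
    case (Box q)
    then show ?thesis using less.prems IH[of q] by (simp add: proof_set_Box)
  next
    case (Forall x q)
    then have ok: "\<forall>d\<in>D. vsubst_ok (id(x := d)) {} q"
      using less.prems by (auto intro: vsubst_ok_rename)
    have "?T (?A(x := d)) q = proof_set L D (vsubst (id(x := d)) {} q)" if "d \<in> D" for d
    proof -
      have "?T ?A (vsubst (id(x := d)) {} q) = ?T (?A(x := ?A d)) q"
        using ok that by (intro truth_rename) blast
      then have "?T (?A(x := d)) q = ?T ?A (vsubst (id(x := d)) {} q)"
        using that by (simp add: canon_assign_def)
      also have "\<dots> = proof_set L D (vsubst (id(x := d)) {} q)"
        using Forall less.prems that fv_rename[of x d q] by (intro IH) auto
      finally show ?thesis .
    qed
    then have "?T ?A (Forall x q) = {G \<in> W. \<forall>d\<in>D. G \<in> proof_set L D (vsubst (id(x := d)) {} q)}"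
      by simp
    then show ?thesis using Forall proof_set_Forall[OF ok] by simp
  qed (simp_all add: proof_set_Top proof_set_Bot)
qed

lemma canonical_countermodel:
  assumes d0: "d0 \<in> D"
  shows "bv \<psi> \<inter> D = {} \<Longrightarrow> \<psi> \<notin> L \<Longrightarrow>
    \<exists>A. range A \<subseteq> D \<and> truth W N D (canon_interp D) A \<psi> \<noteq> W"
proof (induction "card (fv \<psi> - D)" arbitrary: \<psi> rule: less_induct)
  case less
  let ?T = "truth W N D (canon_interp D)"
  show ?case
  proof (cases "fv \<psi> \<subseteq> D")
    case True
    obtain G where G: "world L D G" "\<psi> \<notin> G"
      using exists_world_not_mem[OF pml infinite_D less.prems(2)] by blast
    then have "G \<notin> ?T (canon_assign D d0) \<psi>" "G \<in> W"
      using truth_canonical[OF d0 less.prems(1) True]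
      by (auto simp: proof_set_def canon_worlds_def)
    moreover have "range (canon_assign D d0) \<subseteq> D"
      using d0 by (auto simp: canon_assign_def)
    ultimately show ?thesis by blast
  next
    case False
    then obtain x where x: "x \<in> fv \<psi>" "x \<notin> D" by blast
    obtain y where y: "y \<in> D" "y \<notin> vars \<psi>"
      using fresh_var[OF infinite_D, of "{\<psi>}"] by auto
    let ?\<psi>y = "vsubst (id(x := y)) {} \<psi>"
    have "fv ?\<psi>y - D \<subset> fv \<psi> - D"
      using fv_rename[of x y \<psi>] x y by auto
    then have "card (fv ?\<psi>y - D) < card (fv \<psi> - D)"
      by (simp add: psubset_card_mono)
    moreover have "bv ?\<psi>y \<inter> D = {}" using less.prems(1) by simp
    moreover have "?\<psi>y \<notin> L" by (rule pml_rename_not_mem[OF pml less.prems(2) y(2)])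
    ultimately obtain A where A: "range A \<subseteq> D" "?T A ?\<psi>y \<noteq> W"
      using less.hyps by blast
    have "?T A ?\<psi>y = ?T (A(x := A y)) \<psi>"
      using y by (intro truth_rename vsubst_ok_rename) (simp add: vars_def)
    moreover have "range (A(x := A y)) \<subseteq> D" using A(1) by auto
    ultimately show ?thesis using A(2) by metis
  qed
qed

end

section \<open>Completeness\<close>

lemma pml_Inter: "(\<And>L. L \<in> \<L> \<Longrightarrow> pml L) \<Longrightarrow> pml (\<Inter>\<L>)"
  unfolding pml_def by blast

lemma pml_least_logic: "pml (least_logic t c)"
  unfolding least_logic_def by (rule pml_Inter) blast

lemma least_logic_axioms:
  "mono_ax \<in> least_logic t c" "t \<Longrightarrow> topped_ax \<in> least_logic t c" "c \<Longrightarrow> cufi_ax \<in> least_logic t c"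
  unfolding least_logic_def by blast+

theorem least_logic_complete:
  assumes valid: "\<forall>(C::fm set set) V. frame_class t c C V \<longrightarrow> frame_valid TYPE(nat) C V \<phi>"
  shows "\<phi> \<in> least_logic t c"
proof (rule ccontr)
  let ?L = "least_logic t c" and ?D = "- bv \<phi>"
  \<comment> \<open>keeping the bound variables of \<phi> out of the domain makes instantiating them capture-free\<close>
  assume "\<phi> \<notin> ?L"
  have infinite_D: "infinite ?D"
    by (simp add: Compl_eq_Diff_UNIV Diff_infinite_finite)
  then obtain d0 where d0: "d0 \<in> ?D" by (metis finite.emptyI ex_in_conv)
  interpret canonical_model ?L ?D t c
    using pml_least_logic least_logic_axioms infinite_D by unfold_locales auto
  obtain A where A: "range A \<subseteq> ?D" "truth W N ?D (canon_interp ?D) A \<phi> \<noteq> W"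
    using canonical_countermodel[OF d0 _ \<open>\<phi> \<notin> ?L\<close>] by blast
  then have "W \<noteq> {}" using truth_subset[of W N ?D _ A \<phi>] by blast
  then have "frame_class t c W N" by (rule canon_frame_class)
  moreover have "nmodel W ?D (canon_interp ?D)"
    using d0 by (auto simp: nmodel_def canon_interp_def)
  ultimately have "truth W N ?D (canon_interp ?D) A \<phi> = W"
    using valid A(1) by (auto simp: frame_valid_iff)
  then show False using A(2) by blast
qed

theorem mainTheorem5:
  fixes t c :: bool and \<phi> :: fm
  shows "(\<phi> \<in> least_logic t c \<longrightarrow>
            (\<forall>(C::'w set) V. frame_class t c C V \<longrightarrow> frame_valid TYPE('d) C V \<phi>))
       \<and> ((\<forall>(C::fm set set) V. frame_class t c C V \<longrightarrow> frame_valid TYPE(nat) C V \<phi>)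
            \<longrightarrow> \<phi> \<in> least_logic t c)"
  using least_logic_sound least_logic_complete by blast

end
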